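(* Let $l>0$ (wheelbase length), $d\ge 0$ (distance from the rear axle center to the sensor point along the vehicle's longitudinal symmetry axis), and $\gamma_{\max}\in(0,\pi/2)$ (physical maximum steering angle). Let $\kappa_0\in\mathbb{R}$ be a constant path curvature that the vehicle is capable of following, i.e. $|d\,\kappa_0|<1$ and there exists a steering angle $\gamma$ with $|\gamma|\le\gamma_{\max}$ and $\tan\gamma=\dfrac{l\,\kappa_0}{\sqrt{1-d^2\kappa_0^2}}$. Define $\lambda_1=\sqrt{1-d^2\kappa_0^2}$ and $\lambda_2=1+(l^2-d^2)\kappa_0^2$. Then: (1) $|\kappa_0|\le\overline{\kappa}_0$, where $\overline{\kappa}_0=\dfrac{\tan\gamma_{\max}}{\sqrt{l^2+d^2\tan^2\gamma_{\max}}}$; (2) $\lambda_1\in[\underline{\lambda}_1,1]$, where $\underline{\lambda}_1=\dfrac{l}{\sqrt{l^2+d^2\tan^2\gamma_{\max}}}>0$; (3) $\lambda_2>0$.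
   Context: Kinematic bicycle model with no side slip: a vehicle with wheelbase $l$ follows a planar path with its sensor point A located on the longitudinal symmetry axis at distance $d$ in front of the rear axle center. When point A moves exactly along a circle of curvature $\kappa_0$, the required steering angle $\gamma$ satisfies $\tan\gamma = l\kappa_0/\sqrt{1-d^2\kappa_0^2}$. The standing assumption is that road curvatures are within the vehicle's steering capability, i.e. such a $\gamma$ with $|\gamma|\le\gamma_{\max}$ exists. *)

theory Defs
  imports Complex_Main
begin

end

theory Submission
  imports Defs
begin

text \<open>Since \<open>|\<gamma>| \<le> \<gamma>\<^sub>m\<^sub>a\<^sub>x < \<pi>/2\<close> and \<open>tan\<close> is odd and increasing on \<open>(-\<pi>/2, \<pi>/2)\<close>,
  \<open>l |\<kappa>\<^sub>0| / \<lambda>\<^sub>1 = |tan \<gamma>| \<le> tan \<gamma>\<^sub>m\<^sub>a\<^sub>x\<close>. Squaring and using \<open>\<lambda>\<^sub>1\<^sup>2 = 1 - d\<^sup>2 \<kappa>\<^sub>0\<^sup>2\<close> gives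
  \<open>\<kappa>\<^sub>0\<^sup>2 (l\<^sup>2 + d\<^sup>2 tan\<^sup>2 \<gamma>\<^sub>m\<^sub>a\<^sub>x) \<le> tan\<^sup>2 \<gamma>\<^sub>m\<^sub>a\<^sub>x\<close>, which is (1) and, substituted back into
  \<open>\<lambda>\<^sub>1\<^sup>2\<close>, the lower bound in (2). Finally \<open>\<lambda>\<^sub>2 \<ge> \<lambda>\<^sub>1\<^sup>2 > 0\<close>.\<close>

lemma abs_tan_le_tan:
  fixes x a :: real
  assumes "\<bar>x\<bar> \<le> a" and "a < pi / 2"
  shows "\<bar>tan x\<bar> \<le> tan a"
proof -
  have "\<bar>tan x\<bar> = tan \<bar>x\<bar>"
  proof (cases "x \<ge> 0")
    case True
    then have "tan 0 \<le> tan x" using assms by (intro tan_mono_le) auto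
    then show ?thesis using True by simp
  next
    case False
    then have "tan 0 \<le> tan (- x)" using assms by (intro tan_mono_le) auto
    then show ?thesis using False by simp
  qed
  also have "\<dots> \<le> tan a"
    using assms by (intro tan_mono_le) auto
  finally show ?thesis .
qed

lemma abs_le_divide_sqrt:
  fixes x y z :: real
  assumes "x\<^sup>2 * y \<le> z\<^sup>2" and "0 < y" and "0 \<le> z"
  shows "\<bar>x\<bar> \<le> z / sqrt y"
proof -
  have "\<bar>x\<bar> * sqrt y = sqrt (x\<^sup>2 * y)"
    by (simp add: real_sqrt_mult)
  also have "\<dots> \<le> z"
    using assms real_sqrt_le_mono[OF assms(1)] by simp
  finally show ?thesis
    using assms(2) by (simp add: le_divide_eq)
qed

lemma curvature_sq_bound:
  fixes l d \<kappa> T :: real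
  assumes "0 \<le> l" and "d\<^sup>2 * \<kappa>\<^sup>2 < 1"
    and "l * \<bar>\<kappa>\<bar> / sqrt (1 - d\<^sup>2 * \<kappa>\<^sup>2) \<le> T"
  shows "\<kappa>\<^sup>2 * (l\<^sup>2 + d\<^sup>2 * T\<^sup>2) \<le> T\<^sup>2"
proof -
  define s where "s = sqrt (1 - d\<^sup>2 * \<kappa>\<^sup>2)"
  have "0 < s" and s_sq: "s\<^sup>2 = 1 - d\<^sup>2 * \<kappa>\<^sup>2"
    using assms(2) by (simp_all add: s_def)
  then have "l * \<bar>\<kappa>\<bar> \<le> T * s"
    using assms(3) by (simp add: s_def divide_le_eq)
  then have "(l * \<bar>\<kappa>\<bar>)\<^sup>2 \<le> (T * s)\<^sup>2"
    using assms(1) by (intro power_mono) auto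
  then show ?thesis
    using s_sq by (simp add: power_mult_distrib algebra_simps)
qed

lemma divide_sqrt_le_sqrt:
  fixes l d \<kappa> T :: real
  assumes "0 < l" and "\<kappa>\<^sup>2 * (l\<^sup>2 + d\<^sup>2 * T\<^sup>2) \<le> T\<^sup>2"
  shows "l / sqrt (l\<^sup>2 + d\<^sup>2 * T\<^sup>2) \<le> sqrt (1 - d\<^sup>2 * \<kappa>\<^sup>2)"
proof -
  define R where "R = l\<^sup>2 + d\<^sup>2 * T\<^sup>2"
  have "0 < R"
    using assms(1) by (simp add: R_def add_pos_nonneg)
  have "l\<^sup>2 = R - d\<^sup>2 * T\<^sup>2"
    by (simp add: R_def)
  also have "\<dots> \<le> R - d\<^sup>2 * (\<kappa>\<^sup>2 * R)"
    using assms(2) by (simp add: R_def mult_left_mono)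
  finally have "l\<^sup>2 \<le> (1 - d\<^sup>2 * \<kappa>\<^sup>2) * R"
    by (simp add: algebra_simps)
  then have "l\<^sup>2 / R \<le> 1 - d\<^sup>2 * \<kappa>\<^sup>2"
    by (simp only: pos_divide_le_eq[OF \<open>0 < R\<close>])
  then have "sqrt (l\<^sup>2 / R) \<le> sqrt (1 - d\<^sup>2 * \<kappa>\<^sup>2)"
    by (rule real_sqrt_le_mono)
  then show ?thesis
    using assms(1) by (simp add: R_def real_sqrt_divide)
qed

theorem claim1:
  fixes l d gmax \<kappa>0 :: real
  assumes hl: "l > 0"
    and hd: "d \<ge> 0"
    and hg: "0 < gmax" "gmax < pi / 2"
    and hk: "\<bar>d * \<kappa>0\<bar> < 1"
    and hsteer: "\<exists>\<gamma>::real. \<bar>\<gamma>\<bar> \<le> gmax \<and>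
                   tan \<gamma> = l * \<kappa>0 / sqrt (1 - d\<^sup>2 * \<kappa>0\<^sup>2)"
  shows "\<bar>\<kappa>0\<bar> \<le> tan gmax / sqrt (l\<^sup>2 + d\<^sup>2 * (tan gmax)\<^sup>2)
     \<and> (l / sqrt (l\<^sup>2 + d\<^sup>2 * (tan gmax)\<^sup>2) > 0
        \<and> l / sqrt (l\<^sup>2 + d\<^sup>2 * (tan gmax)\<^sup>2) \<le> sqrt (1 - d\<^sup>2 * \<kappa>0\<^sup>2)
        \<and> sqrt (1 - d\<^sup>2 * \<kappa>0\<^sup>2) \<le> 1)
     \<and> 1 + (l\<^sup>2 - d\<^sup>2) * \<kappa>0\<^sup>2 > 0"
proof -
  obtain \<gamma> where "\<bar>\<gamma>\<bar> \<le> gmax" and tan_\<gamma>: "tan \<gamma> = l * \<kappa>0 / sqrt (1 - d\<^sup>2 * \<kappa>0\<^sup>2)"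
    using hsteer by blast
  have "d\<^sup>2 * \<kappa>0\<^sup>2 < 1"
    using hk by (simp add: abs_square_less_1 flip: power_mult_distrib)
  have "0 < tan gmax"
    using hg by (rule tan_gt_zero)
  have "l * \<bar>\<kappa>0\<bar> / sqrt (1 - d\<^sup>2 * \<kappa>0\<^sup>2) \<le> tan gmax"
    using abs_tan_le_tan[OF \<open>\<bar>\<gamma>\<bar> \<le> gmax\<close> hg(2)] hl \<open>d\<^sup>2 * \<kappa>0\<^sup>2 < 1\<close>
    by (simp add: tan_\<gamma> abs_mult)
  then have bound: "\<kappa>0\<^sup>2 * (l\<^sup>2 + d\<^sup>2 * (tan gmax)\<^sup>2) \<le> (tan gmax)\<^sup>2"
    using hl \<open>d\<^sup>2 * \<kappa>0\<^sup>2 < 1\<close> by (intro curvature_sq_bound) auto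
  have "0 < l\<^sup>2 + d\<^sup>2 * (tan gmax)\<^sup>2"
    using hl by (simp add: add_pos_nonneg)
  then have "\<bar>\<kappa>0\<bar> \<le> tan gmax / sqrt (l\<^sup>2 + d\<^sup>2 * (tan gmax)\<^sup>2)"
    using bound \<open>0 < tan gmax\<close> by (intro abs_le_divide_sqrt) auto
  moreover have "l / sqrt (l\<^sup>2 + d\<^sup>2 * (tan gmax)\<^sup>2) \<le> sqrt (1 - d\<^sup>2 * \<kappa>0\<^sup>2)"
    using hl bound by (rule divide_sqrt_le_sqrt)
  moreover have "1 + (l\<^sup>2 - d\<^sup>2) * \<kappa>0\<^sup>2 > 0"
    unfolding left_diff_distrib
    using \<open>d\<^sup>2 * \<kappa>0\<^sup>2 < 1\<close> mult_nonneg_nonneg[OF zero_le_power2 zero_le_power2, of l \<kappa>0]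
    by linarith
  ultimately show ?thesis
    using hl \<open>0 < l\<^sup>2 + d\<^sup>2 * (tan gmax)\<^sup>2\<close> by simp
qed

end
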